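(* Let $\lambda_1>\lambda_0>0$ and $a,b>0$ with $\lambda_1-\lambda_0>\frac1a+\frac1b$, and let $0<\alpha^*<b/a<\beta^*$ be the optimal stopping boundaries described in the context. Let $X$ be a Poisson process with $X_0=0$ which under the probability measure $\mathsf P_0$ has intensity $\lambda_0$, and set $L_t=\exp\{X_t\log(\lambda_1/\lambda_0)-(\lambda_1-\lambda_0)t\}$. For $\varphi>0$ define $\tau^*(\varphi)=\inf\{t\ge 0:\varphi L_t\notin(\alpha^*,\beta^* )\}$. Then: (1) for any $\varphi_0\in(\alpha^*,\beta^* )$, $\tau^*(\varphi)\to\tau^*(\varphi_0)$ $\mathsf P_0$-a.s. as $\varphi\to\varphi_0$; (2) $\tau^*(\varphi)\to 0$ $\mathsf P_0$-a.s. as $\varphi\downarrow\alpha^*$; (3) $\lim_{\varphi\uparrow\beta^*}\tau^*(\varphi)=\theta(\beta^* )$ $\mathsf P_0$-a.s., where $\theta(\beta^* ):=\inf\{t\ge0: L_t\notin(\alpha^*/\beta^*,1]\}$.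
   Context: Setting: one observes a Poisson process $X$ whose intensity is $\lambda_0$ or $\lambda_1$ ($\lambda_1>\lambda_0>0$). $\mathsf P_0$ ($\mathsf E_0$) denotes the law (expectation) under which $X$ is Poisson with intensity $\lambda_0$, $X_0=0$; $\mathbb S$ is the set of stopping times of the natural filtration of $X$. For a prior parameter $\psi>0$ (prior probability $\psi/(1+\psi)$ of intensity $\lambda_1$) and $\tau\in\mathbb S$, the Bayes cost is $\bar J(\psi;\tau)=\frac{1}{1+\psi}\mathsf E_0\big[\int_0^\tau(1+\psi L_t)\,dt+(a\psi L_\tau)\wedge b\big]$. When $\lambda_1-\lambda_0>1/a+1/b$ there exist unique constants $0<\alpha^*<b/a<\beta^*$ (independent of $\psi$) such that for every $\psi>0$ the stopping time $\inf\{t\ge0:\psi L_t\notin(\alpha^*,\beta^* )\}$ minimizes $\bar J(\psi;\cdot)$ over $\mathbb S$; these are the $\alpha^*,\beta^*$ in the statement. *)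

theory Defs
  imports "HOL-Probability.Probability"
begin

definition poisson_process :: "'a measure \<Rightarrow> real \<Rightarrow> (real \<Rightarrow> 'a \<Rightarrow> nat) \<Rightarrow> bool" where
  "poisson_process M lam X \<longleftrightarrow>
     prob_space M \<and>
     (\<forall>t. X t \<in> measurable M (count_space UNIV)) \<and>
     (\<forall>\<omega>\<in>space M. X 0 \<omega> = 0 \<and> mono_on {0..} (\<lambda>t. X t \<omega>) \<and>
        (\<forall>t\<ge>0. continuous (at_right t) (\<lambda>s. real (X s \<omega>)))) \<and>
     (\<forall>s t. 0 \<le> s \<and> s < t \<longrightarrow>
        distr M (count_space UNIV) (\<lambda>\<omega>. X t \<omega> - X s \<omega>) = measure_pmf (poisson_pmf (lam * (t - s)))) \<and>
     (\<forall>(ts :: nat \<Rightarrow> real) n. 0 \<le> ts 0 \<and> (\<forall>i. ts i < ts (Suc i)) \<longrightarrow>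
        prob_space.indep_vars M (\<lambda>_. count_space UNIV)
          (\<lambda>i \<omega>. X (ts (Suc i)) \<omega> - X (ts i) \<omega>) {..<n})"

definition lik :: "real \<Rightarrow> real \<Rightarrow> (real \<Rightarrow> 'a \<Rightarrow> nat) \<Rightarrow> real \<Rightarrow> 'a \<Rightarrow> real" where
  "lik lam0 lam1 X t \<omega> = exp (real (X t \<omega>) * ln (lam1 / lam0) - (lam1 - lam0) * t)"

definition nat_filtration :: "'a measure \<Rightarrow> (real \<Rightarrow> 'a \<Rightarrow> nat) \<Rightarrow> real \<Rightarrow> 'a set set" where
  "nat_filtration M X t = sigma_sets (space M) (\<Union>s\<in>{0..t}. {X s -` A \<inter> space M | A. True})"

definition is_stopping_time :: "'a measure \<Rightarrow> (real \<Rightarrow> 'a \<Rightarrow> nat) \<Rightarrow> ('a \<Rightarrow> ereal) \<Rightarrow> bool" where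
  "is_stopping_time M X \<tau> \<longleftrightarrow> (\<forall>\<omega>\<in>space M. 0 \<le> \<tau> \<omega>) \<and>
     (\<forall>t\<ge>0. {\<omega>\<in>space M. \<tau> \<omega> \<le> ereal t} \<in> nat_filtration M X t)"

text \<open>Bayes cost
  Jbar(psi; tau) = 1/(1+psi) E_0[ int_0^tau (1 + psi L_t) dt + (a psi L_tau) min b ].
  On {tau = \<infinity>} the integral term is already infinite; the terminal term is set to 0 there.\<close>
definition bayes_cost :: "'a measure \<Rightarrow> (real \<Rightarrow> 'a \<Rightarrow> real) \<Rightarrow> real \<Rightarrow> real \<Rightarrow> real \<Rightarrow> ('a \<Rightarrow> ereal) \<Rightarrow> ennreal" where
  "bayes_cost M L a b \<psi> \<tau> = ennreal (1 / (1 + \<psi>)) *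
     (\<integral>\<^sup>+\<omega>. ((\<integral>\<^sup>+t\<in>{t. 0 \<le> t \<and> ereal t < \<tau> \<omega>}. ennreal (1 + \<psi> * L t \<omega>) \<partial>lborel)
           + (if \<tau> \<omega> = \<infinity> then 0 else ennreal (min (a * \<psi> * L (real_of_ereal (\<tau> \<omega>)) \<omega>) b))) \<partial>M)"

definition exit_time :: "(real \<Rightarrow> 'a \<Rightarrow> real) \<Rightarrow> real \<Rightarrow> real \<Rightarrow> real \<Rightarrow> 'a \<Rightarrow> ereal" where
  "exit_time L \<alpha> \<beta> \<phi> \<omega> = Inf {ereal t | t. 0 \<le> t \<and> \<phi> * L t \<omega> \<notin> {\<alpha><..<\<beta>}}"

definition theta_time :: "(real \<Rightarrow> 'a \<Rightarrow> real) \<Rightarrow> real \<Rightarrow> real \<Rightarrow> 'a \<Rightarrow> ereal" where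
  "theta_time L \<alpha> \<beta> \<omega> = Inf {ereal t | t. 0 \<le> t \<and> L t \<omega> \<notin> {\<alpha> / \<beta><..1}}"

end

theory Submission
  imports Defs
begin

(* Between the jumps of X the path t -> phi L_t decreases continuously, and at a jump it moves up.
   Hence the exit time of phi L from (alpha, beta) depends continuously on phi near phi0 unless
   phi0 L touches a barrier without crossing it: its left limit equals alpha at a jump time, or it
   jumps exactly onto beta. Either way X jumps at one of the countably many times t at which
   phi0 exp (k log (lambda1 / lambda0) - (lambda1 - lambda0) t) is a barrier for some k in N, and a
   Poisson process jumps at a fixed time with probability zero. Before the exit, compactness of
   [0, T] turns the pathwise strict inequalities into uniform margins, which survive small changes
   of phi. As phi decreases to alpha, phi L meets alpha before the first jump, at time
   log (phi / alpha) / (lambda1 - lambda0). As phi increases to beta, the exit conditions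
   phi L >= beta and phi L <= alpha become L > 1 and L <= alpha / beta, which define theta. *)

definition hitting_time :: "(real \<Rightarrow> bool) \<Rightarrow> ereal" where
  "hitting_time P = Inf {ereal t | t. 0 \<le> t \<and> P t}"

lemma hitting_time_nonneg: "0 \<le> hitting_time P"
  unfolding hitting_time_def by (rule Inf_greatest) auto

lemma hitting_time_le: "0 \<le> t \<Longrightarrow> P t \<Longrightarrow> hitting_time P \<le> ereal t"
  unfolding hitting_time_def by (rule Inf_lower) blast

lemma hitting_time_less_iff: "hitting_time P < y \<longleftrightarrow> (\<exists>t\<ge>0. P t \<and> ereal t < y)"
  unfolding hitting_time_def Inf_less_iff by blast

lemma not_before_hitting_time:
  assumes "ereal T < hitting_time P" "0 \<le> t" "t \<le> T"
  shows "\<not> P t"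
proof
  assume "P t"
  with assms(2) have "hitting_time P \<le> ereal T"
    using hitting_time_le[of t P] assms(3) by (simp add: order_trans)
  with assms(1) show False by simp
qed

lemma le_hitting_time: "(\<And>t. 0 \<le> t \<Longrightarrow> t \<le> T \<Longrightarrow> \<not> P t) \<Longrightarrow> ereal T \<le> hitting_time P"
  unfolding hitting_time_def by (rule Inf_greatest) force

lemma hitting_time_tendstoI:
  assumes lower: "\<And>T. 0 \<le> T \<Longrightarrow> ereal T < h \<Longrightarrow> \<forall>\<^sub>F \<phi> in F. \<forall>t\<in>{0..T}. \<not> P \<phi> t"
    and upper: "\<And>y. h < y \<Longrightarrow> \<exists>t\<ge>0. ereal t < y \<and> (\<forall>\<^sub>F \<phi> in F. P \<phi> t)"
  shows "((\<lambda>\<phi>. hitting_time (P \<phi>)) \<longlongrightarrow> h) F"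
proof (rule order_tendstoI)
  fix y assume "y < h"
  show "\<forall>\<^sub>F \<phi> in F. y < hitting_time (P \<phi>)"
  proof (cases "y < 0")
    case True
    then show ?thesis
      using hitting_time_nonneg by (intro always_eventually allI) (rule less_le_trans)
  next
    case False
    obtain T where T: "y < ereal T" "ereal T < h"
      using ereal_dense2[OF \<open>y < h\<close>] by blast
    with False have "0 \<le> T" by (cases y) auto
    from lower[OF this T(2)] show ?thesis
    proof eventually_elim
      case (elim \<phi>)
      then have "ereal T \<le> hitting_time (P \<phi>)"
        by (intro le_hitting_time) auto
      with T(1) show ?case by (rule less_le_trans)
    qed
  qed
next
  fix y assume "h < y"
  then obtain t where "0 \<le> t" "ereal t < y" "\<forall>\<^sub>F \<phi> in F. P \<phi> t"
    using upper by blast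
  then show "\<forall>\<^sub>F \<phi> in F. hitting_time (P \<phi>) < y"
    by (auto elim!: eventually_mono simp: hitting_time_less_iff)
qed

lemma compact_uniform_lower_bound:
  fixes f :: "'a::topological_space \<Rightarrow> real"
  assumes "compact S"
    and local: "\<And>t. t \<in> S \<Longrightarrow> \<exists>U m. open U \<and> t \<in> U \<and> a < m \<and> (\<forall>u\<in>U \<inter> S. m \<le> f u)"
  shows "\<exists>m>a. \<forall>u\<in>S. m \<le> f u"
proof -
  obtain U m where U: "\<And>t. t \<in> S \<Longrightarrow> open (U t) \<and> t \<in> U t \<and> a < m t \<and> (\<forall>u\<in>U t \<inter> S. m t \<le> f u)"
    using local by metis
  obtain C where C: "C \<subseteq> S" "finite C" "S \<subseteq> (\<Union>t\<in>C. U t)"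
    by (rule compactE_image[OF \<open>compact S\<close>, of S U]) (use U in auto)
  define m0 where "m0 = Min (insert (a + 1) (m ` C))"
  have "a < m0"
    unfolding m0_def using C U by (subst Min_gr_iff) auto
  moreover have "m0 \<le> f u" if "u \<in> S" for u
  proof -
    from that C obtain t where "t \<in> C" "u \<in> U t" by blast
    then have "m0 \<le> m t" "m t \<le> f u"
      unfolding m0_def using C U that by auto
    then show ?thesis by linarith
  qed
  ultimately show ?thesis by blast
qed

lemma eventually_eq_at_right_of_continuous:
  fixes f :: "real \<Rightarrow> nat"
  assumes "continuous (at_right t) (\<lambda>s. real (f s))"
  shows "\<forall>\<^sub>F u in at_right t. f u = f t"
proof -
  have lim: "((\<lambda>s. real (f s)) \<longlongrightarrow> real (f t)) (at_right t)"
    using assms by (simp add: continuous_within)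
  have "\<forall>\<^sub>F u in at_right t. real (f t) - 1 < real (f u)"
    by (rule order_tendstoD(1)[OF lim]) simp
  moreover have "\<forall>\<^sub>F u in at_right t. real (f u) < real (f t) + 1"
    by (rule order_tendstoD(2)[OF lim]) simp
  ultimately show ?thesis by eventually_elim auto
qed

lemma eventually_scaled_outside:
  fixes v :: real
  assumes "K * v < a \<or> b < K * v" and "((\<lambda>\<phi>. \<phi>) \<longlongrightarrow> K) F"
  shows "\<forall>\<^sub>F \<phi> in F. \<phi> * v \<notin> {a<..<b}"
proof -
  have lim: "((\<lambda>\<phi>. \<phi> * v) \<longlongrightarrow> K * v) F"
    by (intro tendsto_intros assms(2))
  from assms(1) show ?thesis
  proof
    assume "K * v < a"
    from order_tendstoD(2)[OF lim this] show ?thesis by eventually_elim auto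
  next
    assume "b < K * v"
    from order_tendstoD(1)[OF lim this] show ?thesis by eventually_elim auto
  qed
qed

definition lik_path :: "(real \<Rightarrow> nat) \<Rightarrow> real \<Rightarrow> real \<Rightarrow> real \<Rightarrow> real" where
  "lik_path x c d t = exp (real (x t) * c - d * t)"

definition jumps_at :: "(real \<Rightarrow> nat) \<Rightarrow> real \<Rightarrow> bool" where
  "jumps_at x t \<longleftrightarrow> 0 < t \<and> (\<forall>u\<in>{0..<t}. x u < x t)"

text \<open>Between jumps, K times the likelihood path runs along one of the curves
  s \<mapsto> K exp (k c - d s), k \<in> \<nat>; these are the times at which such a curve is at level A.\<close>
definition level_times :: "real \<Rightarrow> real \<Rightarrow> real \<Rightarrow> real \<Rightarrow> real set" where
  "level_times c d K A = {s. \<exists>k::nat. K * exp (real k * c - d * s) = A}"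

lemma countable_level_times:
  assumes "0 < K" "d \<noteq> 0"
  shows "countable (level_times c d K A)"
proof -
  have "level_times c d K A \<subseteq> range (\<lambda>k::nat. (real k * c - ln (A / K)) / d)"
  proof
    fix s assume "s \<in> level_times c d K A"
    then obtain k :: nat where "K * exp (real k * c - d * s) = A"
      by (auto simp: level_times_def)
    then have "exp (real k * c - d * s) = A / K"
      using assms(1) by (simp add: field_simps)
    then have "real k * c - d * s = ln (A / K)"
      by (metis ln_exp)
    then show "s \<in> range (\<lambda>k::nat. (real k * c - ln (A / K)) / d)"
      using assms(2) by (intro image_eqI[of _ _ k]) (auto simp: field_simps)
  qed
  then show ?thesis
    by (rule countable_subset) simp
qed

locale likelihood_path =
  fixes x :: "real \<Rightarrow> nat" and c d :: real
  assumes start: "x 0 = 0"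
    and mono: "mono_on {0..} x"
    and right_continuous: "\<And>t. 0 \<le> t \<Longrightarrow> continuous (at_right t) (\<lambda>s. real (x s))"
    and c_pos: "0 < c" and d_pos: "0 < d"
begin

abbreviation L :: "real \<Rightarrow> real" where
  "L \<equiv> lik_path x c d"

lemma L_pos: "0 < L t"
  by (simp add: lik_path_def)

lemma L_0: "L 0 = 1"
  by (simp add: lik_path_def start)

lemma x_mono: "0 \<le> s \<Longrightarrow> s \<le> t \<Longrightarrow> x s \<le> x t"
  using mono by (auto simp: mono_on_def)

lemma L_strict_decreasing_on_flat: "x u = x t \<Longrightarrow> t < u \<Longrightarrow> L u < L t"
  using d_pos by (simp add: lik_path_def)

lemma exp_le_L:
  assumes "k \<le> x u" "u \<le> r"
  shows "exp (real k * c - d * r) \<le> L u"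
proof -
  have "real k * c \<le> real (x u) * c"
    using assms(1) c_pos by (simp add: mult_right_mono)
  moreover have "d * u \<le> d * r"
    using assms(2) d_pos by (simp add: mult_left_mono)
  ultimately show ?thesis
    by (simp add: lik_path_def)
qed

lemma L_le_exp:
  assumes "x u \<le> k" "r \<le> u"
  shows "L u \<le> exp (real k * c - d * r)"
proof -
  have "real (x u) * c \<le> real k * c"
    using assms(1) c_pos by (simp add: mult_right_mono)
  moreover have "d * r \<le> d * u"
    using assms(2) d_pos by (simp add: mult_left_mono)
  ultimately show ?thesis
    by (simp add: lik_path_def)
qed

lemma right_flat:
  assumes "0 \<le> t"
  shows "\<exists>\<delta>>0. \<forall>u\<in>{t..<t + \<delta>}. x u = x t"
proof -
  obtain b where "t < b" and flat: "\<And>u. t < u \<Longrightarrow> u < b \<Longrightarrow> x u = x t"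
    using eventually_eq_at_right_of_continuous[OF right_continuous[OF assms]]
    unfolding eventually_at_right_field by blast
  then show ?thesis
    by (intro exI[of _ "b - t"]) (auto simp: le_less)
qed

lemma left_flat:
  assumes "0 < t"
  shows "\<exists>s\<in>{0..<t}. \<forall>u\<in>{s..<t}. x u = x s"
proof -
  have "x ` {0..<t} \<subseteq> {..x t}"
    using x_mono by auto
  then have fin: "finite (x ` {0..<t})"
    using finite_subset by blast
  have ne: "x ` {0..<t} \<noteq> {}"
    using assms by auto
  obtain s where s: "s \<in> {0..<t}" "x s = Max (x ` {0..<t})"
    using Max_in[OF fin ne] by auto
  have "x u = x s" if "u \<in> {s..<t}" for u
  proof (rule antisym)
    show "x u \<le> x s"
      using that s fin by simp
    show "x s \<le> x u"
      using that s(1) x_mono by simp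
  qed
  with s show ?thesis by blast
qed

lemma not_jumps_atD:
  assumes "0 < t" "\<not> jumps_at x t"
  shows "\<exists>s\<in>{0..<t}. x s = x t"
proof -
  from assms obtain s where "s \<in> {0..<t}" "x t \<le> x s"
    by (auto simp: jumps_at_def not_less)
  moreover have "x s \<le> x t"
    using \<open>s \<in> {0..<t}\<close> x_mono by simp
  ultimately show ?thesis
    using le_antisym by blast
qed

lemma left_limit_above:
  assumes t: "0 \<le> t"
    and above: "\<forall>u\<in>{0..t}. a < K * L u"
    and no_jump: "\<forall>s\<in>level_times c d K a. \<not> jumps_at x s"
  obtains s k where "s < t" "\<And>u. 0 \<le> u \<Longrightarrow> s < u \<Longrightarrow> k \<le> x u"
    "a < K * exp (real k * c - d * t)"
proof (cases "t = 0")
  case True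
  show ?thesis
  proof (rule that)
    show "-1 < t"
      using True by simp
    show "x 0 \<le> x u" if "0 \<le> u" for u
      using that x_mono by simp
    show "a < K * exp (real (x 0) * c - d * t)"
      using above True by (simp add: lik_path_def)
  qed
next
  case False
  with t have "0 < t" by simp
  then obtain s where s: "s \<in> {0..<t}" and flat: "\<And>u. u \<in> {s..<t} \<Longrightarrow> x u = x s"
    using left_flat by blast
  \<comment> \<open>K exp (x s c - d t) is the left limit of K L at t. Were it equal to a, t would be a level
      time, hence not a jump time, and the left limit would be K L t > a.\<close>
  have "a \<le> K * exp (real (x s) * c - d * t)"
  proof (rule tendsto_lowerbound)
    show "((\<lambda>u. K * exp (real (x s) * c - d * u)) \<longlongrightarrow> K * exp (real (x s) * c - d * t)) (at_left t)"
      by (intro tendsto_intros)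
    have "\<forall>\<^sub>F u in at_left t. u \<in> {s<..<t}"
      using s by (intro eventually_at_left_real) simp
    then show "\<forall>\<^sub>F u in at_left t. a \<le> K * exp (real (x s) * c - d * u)"
    proof eventually_elim
      case (elim u)
      with s have "u \<in> {0..t}" "u \<in> {s..<t}"
        by simp_all
      with above flat have "a < K * L u" "x u = x s"
        by blast+
      then show ?case
        by (simp add: lik_path_def)
    qed
  qed simp
  moreover have "K * exp (real (x s) * c - d * t) \<noteq> a"
  proof
    assume eq: "K * exp (real (x s) * c - d * t) = a"
    then have "t \<in> level_times c d K a"
      unfolding level_times_def by blast
    with no_jump \<open>0 < t\<close> obtain r where r: "r \<in> {0..<t}" "x r = x t"
      using not_jumps_atD by blast
    have "x t \<le> x s"
    proof (cases "r \<le> s")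
      case True
      with r x_mono[of r s] show ?thesis by simp
    next
      case False
      with r flat[of r] show ?thesis by simp
    qed
    moreover have "x s \<le> x t"
      using s x_mono by simp
    ultimately have "K * L t = a"
      using eq by (simp add: lik_path_def)
    moreover have "a < K * L t"
      using above t by simp
    ultimately show False
      by simp
  qed
  ultimately have k_above: "a < K * exp (real (x s) * c - d * t)"
    by simp
  show ?thesis
  proof (rule that)
    show "s < t"
      using s by simp
    show "x s \<le> x u" if "0 \<le> u" "s < u" for u
      using that s x_mono by simp
  qed (rule k_above)
qed

lemma lower_margin_near:
  assumes t: "0 \<le> t" and K: "0 < K"
    and above: "\<forall>u\<in>{0..t}. a < K * L u"
    and no_jump: "\<forall>s\<in>level_times c d K a. \<not> jumps_at x s"
  shows "\<exists>s \<delta> m. s < t \<and> 0 < \<delta> \<and> a < m \<and> (\<forall>u\<in>{s<..<t + \<delta>}. 0 \<le> u \<longrightarrow> m \<le> K * L u)"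
proof -
  obtain s k where s: "s < t" and k_le: "\<And>u. 0 \<le> u \<Longrightarrow> s < u \<Longrightarrow> k \<le> x u"
    and k_above: "a < K * exp (real k * c - d * t)"
    using left_limit_above[OF t above no_jump] by metis
  have "((\<lambda>\<delta>. K * exp (real k * c - d * (t + \<delta>))) \<longlongrightarrow> K * exp (real k * c - d * (t + 0))) (at_right 0)"
    by (intro tendsto_intros)
  with k_above have "\<forall>\<^sub>F \<delta> in at_right 0. a < K * exp (real k * c - d * (t + \<delta>))"
    by (intro order_tendstoD(1)) simp_all
  then obtain \<delta> where \<delta>: "0 < \<delta>" "a < K * exp (real k * c - d * (t + \<delta>))"
    using eventually_happens'[OF trivial_limit_at_right_real eventually_conj[OF eventually_at_right_less]]
    by blast
  have "K * exp (real k * c - d * (t + \<delta>)) \<le> K * L u" if "u \<in> {s<..<t + \<delta>}" "0 \<le> u" for u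
    using that k_le K exp_le_L[of k u "t + \<delta>"] by auto
  with s \<delta> show ?thesis
    by (intro exI[of _ s] exI[of _ \<delta>] exI[of _ "K * exp (real k * c - d * (t + \<delta>))"]) simp
qed

lemma upper_margin_near:
  assumes t: "0 \<le> t" and K: "0 < K" and below: "K * L t < b"
  shows "\<exists>s \<delta> M. s < t \<and> 0 < \<delta> \<and> M < b \<and> (\<forall>u\<in>{s<..<t + \<delta>}. 0 \<le> u \<longrightarrow> K * L u \<le> M)"
proof -
  obtain \<delta> where \<delta>: "0 < \<delta>" "\<And>u. u \<in> {t..<t + \<delta>} \<Longrightarrow> x u = x t"
    using right_flat[OF t] by blast
  have x_le: "x u \<le> x t" if "0 \<le> u" "u < t + \<delta>" for u
  proof (cases "u \<le> t")
    case True
    with that x_mono show ?thesis by simp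
  next
    case False
    with that \<delta>(2)[of u] show ?thesis by simp
  qed
  have "((\<lambda>s. K * exp (real (x t) * c - d * s)) \<longlongrightarrow> K * L t) (at_left t)"
    unfolding lik_path_def by (intro tendsto_intros)
  moreover have "\<forall>\<^sub>F s in at_left t. s < t"
    using eventually_at_left_real[of "t - 1" t] by (simp add: eventually_mono)
  ultimately have "\<forall>\<^sub>F s in at_left t. s < t \<and> K * exp (real (x t) * c - d * s) < b"
    using below by (simp add: eventually_conj order_tendstoD(2))
  then obtain s where s: "s < t" "K * exp (real (x t) * c - d * s) < b"
    using eventually_happens'[OF trivial_limit_at_left_real] by blast
  have "K * L u \<le> K * exp (real (x t) * c - d * s)" if "u \<in> {s<..<t + \<delta>}" "0 \<le> u" for u
    using that x_le K L_le_exp[of u "x t" s] by simp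
  with s \<delta>(1) show ?thesis
    by (intro exI[of _ s] exI[of _ \<delta>] exI[of _ "K * exp (real (x t) * c - d * s)"]) simp
qed

lemma lower_margin:
  assumes K: "0 < K" and above: "\<forall>u\<in>{0..T}. a < K * L u"
    and no_jump: "\<forall>s\<in>level_times c d K a. \<not> jumps_at x s"
  shows "\<exists>m>a. \<forall>u\<in>{0..T}. m \<le> K * L u"
proof (rule compact_uniform_lower_bound[OF compact_Icc])
  fix t assume t: "t \<in> {0..T}"
  with above have "\<forall>u\<in>{0..t}. a < K * L u" by auto
  with t obtain s \<delta> m where "s < t" "0 < \<delta>" "a < m" "\<forall>u\<in>{s<..<t + \<delta>}. 0 \<le> u \<longrightarrow> m \<le> K * L u"
    using lower_margin_near[OF _ K _ no_jump] by (metis atLeastAtMost_iff)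
  then show "\<exists>U m. open U \<and> t \<in> U \<and> a < m \<and> (\<forall>u\<in>U \<inter> {0..T}. m \<le> K * L u)"
    by (intro exI[of _ "{s<..<t + \<delta>}"] exI[of _ m]) auto
qed

lemma upper_margin:
  assumes K: "0 < K" and below: "\<forall>u\<in>{0..T}. K * L u < b"
  shows "\<exists>M<b. \<forall>u\<in>{0..T}. K * L u \<le> M"
proof -
  have "\<exists>m>-b. \<forall>u\<in>{0..T}. m \<le> - (K * L u)"
  proof (rule compact_uniform_lower_bound[OF compact_Icc])
    fix t assume t: "t \<in> {0..T}"
    with below have "0 \<le> t" "K * L t < b" by auto
    then obtain s \<delta> M where "s < t" "0 < \<delta>" "M < b" "\<forall>u\<in>{s<..<t + \<delta>}. 0 \<le> u \<longrightarrow> K * L u \<le> M"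
      using upper_margin_near[OF _ K] by blast
    then show "\<exists>U m. open U \<and> t \<in> U \<and> - b < m \<and> (\<forall>u\<in>U \<inter> {0..T}. m \<le> - (K * L u))"
      by (intro exI[of _ "{s<..<t + \<delta>}"] exI[of _ "- M"]) auto
  qed
  then obtain m where "- b < m" "\<forall>u\<in>{0..T}. m \<le> - (K * L u)"
    by blast
  then show ?thesis
    by (intro exI[of _ "- m"]) force
qed

lemma exit_strictly_near:
  assumes t: "0 \<le> t" and K: "0 < K" "K < b" and exit: "K * L t \<notin> {a<..<b}" and \<epsilon>: "0 < \<epsilon>"
    and no_jump: "\<forall>s\<in>level_times c d K b. \<not> jumps_at x s"
  shows "\<exists>u\<ge>0. u < t + \<epsilon> \<and> (K * L u < a \<or> b < K * L u)"
proof -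
  consider "K * L t \<le> a" | "b < K * L t" | "K * L t = b"
    using exit by fastforce
  then show ?thesis
  proof cases
    case 1
    obtain \<delta> where \<delta>: "0 < \<delta>" "\<And>u. u \<in> {t..<t + \<delta>} \<Longrightarrow> x u = x t"
      using right_flat[OF t] by blast
    define u where "u = t + min \<epsilon> \<delta> / 2"
    have u: "t < u" "u < t + \<epsilon>" "u < t + \<delta>"
      using \<delta>(1) \<epsilon> by (simp_all add: u_def)
    then have "x u = x t"
      using \<delta>(2)[of u] by simp
    with u(1) have "K * L u < K * L t"
      using K by (simp add: L_strict_decreasing_on_flat)
    with 1 t u show ?thesis
      by (intro exI[of _ u]) simp
  next
    case 2
    with t \<epsilon> show ?thesis by auto
  next
    case 3
    \<comment> \<open>t is a level time, so K L reaches b continuously and exceeds it just before t.\<close>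
    have "t \<noteq> 0"
      using 3 K L_0 by auto
    moreover have "t \<in> level_times c d K b"
      using 3 by (auto simp: level_times_def lik_path_def)
    ultimately obtain s where s: "s \<in> {0..<t}" "x s = x t"
      using no_jump not_jumps_atD[of t] t by auto
    then have "K * L t < K * L s"
      using K L_strict_decreasing_on_flat by simp
    with 3 s \<epsilon> show ?thesis
      by (intro exI[of _ s]) simp
  qed
qed

theorem tendsto_exit_time_at:
  assumes a: "0 < a" and K: "K \<in> {a<..<b}"
    and no_jump: "\<forall>s\<in>level_times c d K a \<union> level_times c d K b. \<not> jumps_at x s"
  shows "((\<lambda>\<phi>. hitting_time (\<lambda>t. \<phi> * L t \<notin> {a<..<b})) \<longlongrightarrow> hitting_time (\<lambda>t. K * L t \<notin> {a<..<b})) (at K)"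
proof (rule hitting_time_tendstoI)
  from a K have K_pos: "0 < K" by simp
  fix T assume T: "0 \<le> T" "ereal T < hitting_time (\<lambda>t. K * L t \<notin> {a<..<b})"
  have inside: "\<forall>u\<in>{0..T}. K * L u \<in> {a<..<b}"
    using not_before_hitting_time[OF T(2)] by simp
  obtain m where m: "a < m" "\<forall>u\<in>{0..T}. m \<le> K * L u"
    using lower_margin[OF K_pos] inside no_jump by force
  obtain M where M: "M < b" "\<forall>u\<in>{0..T}. K * L u \<le> M"
    using upper_margin[OF K_pos] inside by force
  have "((\<lambda>\<phi>. \<phi> / K * r) \<longlongrightarrow> K / K * r) (at K)" for r
    using K_pos by (intro tendsto_intros) auto
  then have lim: "((\<lambda>\<phi>. \<phi> / K * r) \<longlongrightarrow> r) (at K)" for r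
    using K_pos by simp
  have "\<forall>\<^sub>F \<phi> in at K. a < \<phi> / K * m"
    using order_tendstoD(1)[OF lim m(1)] .
  moreover have "\<forall>\<^sub>F \<phi> in at K. \<phi> / K * M < b"
    using order_tendstoD(2)[OF lim M(1)] .
  ultimately show "\<forall>\<^sub>F \<phi> in at K. \<forall>t\<in>{0..T}. \<not> \<phi> * L t \<notin> {a<..<b}"
  proof eventually_elim
    case (elim \<phi>)
    have "0 < \<phi> / K * m"
      using elim(1) a by linarith
    moreover have "0 < m"
      using a m(1) by simp
    ultimately have "0 < \<phi> / K"
      by (rule zero_less_mult_pos2)
    show ?case
    proof
      fix t assume t: "t \<in> {0..T}"
      have "\<phi> / K * m \<le> \<phi> / K * (K * L t)" "\<phi> / K * (K * L t) \<le> \<phi> / K * M"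
        using m(2) M(2) t \<open>0 < \<phi> / K\<close> by (intro mult_left_mono; simp)+
      moreover have "\<phi> / K * (K * L t) = \<phi> * L t"
        using K_pos by simp
      ultimately show "\<not> \<phi> * L t \<notin> {a<..<b}"
        using elim by simp
    qed
  qed
next
  from a K have K: "0 < K" "K < b" by simp_all
  fix y assume "hitting_time (\<lambda>t. K * L t \<notin> {a<..<b}) < y"
  then obtain t where t: "0 \<le> t" "K * L t \<notin> {a<..<b}" "ereal t < y"
    by (auto simp: hitting_time_less_iff)
  then obtain z where z: "t < z" "ereal z < y"
    using ereal_dense2 by force
  then obtain u where u: "0 \<le> u" "u < z" "K * L u < a \<or> b < K * L u"
    using exit_strictly_near[OF t(1) K t(2), of "z - t"] no_jump by auto
  have "\<forall>\<^sub>F \<phi> in at K. \<phi> * L u \<notin> {a<..<b}"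
    using u(3) by (rule eventually_scaled_outside) (rule tendsto_ident_at)
  moreover have "ereal u < y"
    using u(2) by (intro less_trans[OF _ z(2)]) simp
  ultimately show "\<exists>u\<ge>0. ereal u < y \<and> (\<forall>\<^sub>F \<phi> in at K. \<phi> * L u \<notin> {a<..<b})"
    using u(1) by blast
qed

theorem tendsto_exit_time_at_right_lower:
  assumes a: "0 < a"
  shows "((\<lambda>\<phi>. hitting_time (\<lambda>t. \<phi> * L t \<notin> {a<..<b})) \<longlongrightarrow> 0) (at_right a)"
proof (rule hitting_time_tendstoI)
  fix T :: real
  assume "0 \<le> T" "ereal T < 0"
  then show "\<forall>\<^sub>F \<phi> in at_right a. \<forall>t\<in>{0..T}. \<not> \<phi> * L t \<notin> {a<..<b}"
    by simp
next
  fix y :: ereal assume "0 < y"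
  then obtain z where z: "0 < z" "ereal z < y"
    using ereal_dense2 by (force simp: zero_ereal_def)
  obtain \<delta> where \<delta>: "0 < \<delta>" "\<And>u. u \<in> {0..<\<delta>} \<Longrightarrow> x u = 0"
    using right_flat[of 0] start by auto
  define t where "t = min z \<delta> / 2"
  have t: "0 < t" "t < z" "t < \<delta>"
    using z \<delta>(1) by (simp_all add: t_def)
  then have L_t: "L t = exp (- (d * t))"
    using \<delta>(2)[of t] by (simp add: lik_path_def)
  have "a < a * exp (d * t)"
    using a d_pos t by simp
  then have "\<forall>\<^sub>F \<phi> in at_right a. \<phi> \<in> {a<..<a * exp (d * t)}"
    by (rule eventually_at_right_real)
  then have "\<forall>\<^sub>F \<phi> in at_right a. \<phi> * L t \<notin> {a<..<b}"
  proof eventually_elim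
    case (elim \<phi>)
    then have "\<phi> * L t < a * exp (d * t) * exp (- (d * t))"
      by (simp add: L_t)
    also have "\<dots> = a"
      by (simp add: mult.assoc flip: exp_add)
    finally show ?case
      by simp
  qed
  moreover have "ereal t < y"
    using t(2) by (intro less_trans[OF _ z(2)]) simp
  ultimately show "\<exists>t\<ge>0. ereal t < y \<and> (\<forall>\<^sub>F \<phi> in at_right a. \<phi> * L t \<notin> {a<..<b})"
    using t(1) by (intro exI[of _ t]) simp
qed

theorem tendsto_exit_time_at_left_upper:
  assumes a: "0 < a" "a < b" and no_jump: "\<forall>s\<in>level_times c d b a. \<not> jumps_at x s"
  shows "((\<lambda>\<phi>. hitting_time (\<lambda>t. \<phi> * L t \<notin> {a<..<b})) \<longlongrightarrow> hitting_time (\<lambda>t. L t \<notin> {a / b<..1})) (at_left b)"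
proof (rule hitting_time_tendstoI)
  from a have b: "0 < b" by simp
  fix T assume T: "0 \<le> T" "ereal T < hitting_time (\<lambda>t. L t \<notin> {a / b<..1})"
  have inside: "\<forall>u\<in>{0..T}. L u \<in> {a / b<..1}"
    using not_before_hitting_time[OF T(2)] by simp
  then have "\<forall>u\<in>{0..T}. a < b * L u"
    using b by (simp add: field_simps)
  then obtain m where m: "a < m" "\<forall>u\<in>{0..T}. m \<le> b * L u"
    using lower_margin[OF b _ no_jump] by blast
  have "b * a / m < b"
    using m(1) a b by (simp add: field_simps)
  then have "\<forall>\<^sub>F \<phi> in at_left b. \<phi> \<in> {b * a / m<..<b}"
    by (rule eventually_at_left_real)
  then show "\<forall>\<^sub>F \<phi> in at_left b. \<forall>t\<in>{0..T}. \<not> \<phi> * L t \<notin> {a<..<b}"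
  proof eventually_elim
    case (elim \<phi>)
    have "0 < m"
      using a m(1) by simp
    with elim b have \<phi>: "a < \<phi> / b * m" "\<phi> < b"
      by (simp_all add: field_simps)
    have "0 < b * a / m"
      using a b \<open>0 < m\<close> by simp
    with elim have "0 < \<phi>"
      by simp
    show ?case
    proof
      fix t assume "t \<in> {0..T}"
      with m(2) \<open>0 < \<phi>\<close> b have "\<phi> / b * m \<le> \<phi> * L t"
        using mult_left_mono[of m "b * L t" "\<phi> / b"] by simp
      moreover have "\<phi> * L t \<le> \<phi>"
        using inside \<open>t \<in> {0..T}\<close> \<open>0 < \<phi>\<close> by (simp add: mult_left_le)
      ultimately show "\<not> \<phi> * L t \<notin> {a<..<b}"
        using \<phi> by simp
    qed
  qed
next
  from a have b: "0 < b" by simp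
  fix y assume "hitting_time (\<lambda>t. L t \<notin> {a / b<..1}) < y"
  then obtain t where t: "0 \<le> t" "L t \<notin> {a / b<..1}" "ereal t < y"
    by (auto simp: hitting_time_less_iff)
  have "\<forall>\<^sub>F \<phi> in at_left b. \<phi> * L t \<notin> {a<..<b}"
  proof (cases "1 < L t")
    case True
    then have "b < b * L t"
      using b by simp
    then show ?thesis
      by (intro eventually_scaled_outside[of b] tendsto_ident_at) simp
  next
    case False
    with t(2) b have "b * L t \<le> a"
      by (simp add: field_simps)
    have "\<forall>\<^sub>F \<phi> in at_left b. \<phi> \<in> {0<..<b}"
      using b by (rule eventually_at_left_real)
    then show ?thesis
    proof eventually_elim
      case (elim \<phi>)
      then have "\<phi> * L t < b * L t"
        using L_pos by (simp add: mult_strict_right_mono)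
      with \<open>b * L t \<le> a\<close> show ?case
        by simp
    qed
  qed
  with t show "\<exists>t\<ge>0. ereal t < y \<and> (\<forall>\<^sub>F \<phi> in at_left b. \<phi> * L t \<notin> {a<..<b})"
    by blast
qed

end

lemma poisson_process_prob_increase:
  assumes PP: "poisson_process M lam X" and lam: "0 < lam" and "0 \<le> r" "r < s"
  shows "measure M {\<omega>\<in>space M. X r \<omega> < X s \<omega>} = 1 - exp (- (lam * (s - r)))"
proof -
  interpret prob_space M
    using PP by (simp add: poisson_process_def)
  have [measurable]: "X t \<in> M \<rightarrow>\<^sub>M count_space UNIV" for t
    using PP by (simp add: poisson_process_def)
  have increment: "distr M (count_space UNIV) (\<lambda>\<omega>. X s \<omega> - X r \<omega>) = measure_pmf (poisson_pmf (lam * (s - r)))"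
    using PP assms(3,4) by (simp add: poisson_process_def)
  have "{\<omega>\<in>space M. X r \<omega> < X s \<omega>} = (\<lambda>\<omega>. X s \<omega> - X r \<omega>) -` (UNIV - {0}) \<inter> space M"
    by auto
  also have "measure M \<dots> = measure (distr M (count_space UNIV) (\<lambda>\<omega>. X s \<omega> - X r \<omega>)) (UNIV - {0})"
    by (rule measure_distr[symmetric]) simp_all
  also have "\<dots> = measure_pmf.prob (poisson_pmf (lam * (s - r))) (UNIV - {0})"
    by (simp add: increment)
  also have "\<dots> = 1 - pmf (poisson_pmf (lam * (s - r))) 0"
    using measure_pmf.prob_compl[of "{0}" "poisson_pmf (lam * (s - r))"] by (simp add: measure_pmf_single)
  also have "\<dots> = 1 - exp (- (lam * (s - r)))"
    using lam assms(4) by simp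
  finally show ?thesis .
qed

lemma poisson_process_AE_not_jumps_at:
  assumes PP: "poisson_process M lam X" and lam: "0 < lam"
  shows "AE \<omega> in M. \<not> jumps_at (\<lambda>t. X t \<omega>) s"
proof (cases "0 < s")
  case False
  then show ?thesis
    by (simp add: jumps_at_def)
next
  case True
  interpret prob_space M
    using PP by (simp add: poisson_process_def)
  have [measurable]: "X t \<in> M \<rightarrow>\<^sub>M count_space UNIV" for t
    using PP by (simp add: poisson_process_def)
  define e where "e n = s / real (Suc n)" for n
  have e: "0 < e n" "e n \<le> s" for n
    using True by (auto simp: e_def field_simps)
  define E where "E n = {\<omega>\<in>space M. X (s - e n) \<omega> < X s \<omega>}" for n
  have E_sets: "E n \<in> sets M" for n
  proof -
    have "E n = (\<lambda>\<omega>. X s \<omega> - X (s - e n) \<omega>) -` (UNIV - {0}) \<inter> space M"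
      by (auto simp: E_def)
    then show ?thesis by simp
  qed
  have "measure M (\<Inter>n. E n) \<le> 1 - exp (- (lam * e n))" for n
  proof -
    have "measure M (\<Inter>n. E n) \<le> measure M (E n)"
      using E_sets by (intro finite_measure_mono) auto
    also have "\<dots> = 1 - exp (- (lam * e n))"
      unfolding E_def using poisson_process_prob_increase[OF PP lam, of "s - e n" s] e[of n] by simp
    finally show ?thesis .
  qed
  moreover have "(\<lambda>n. 1 - exp (- (lam * e n))) \<longlonglongrightarrow> 1 - exp (- (lam * 0))"
    unfolding e_def by (intro tendsto_intros LIMSEQ_Suc[OF lim_const_over_n])
  ultimately have "measure M (\<Inter>n. E n) \<le> 0"
    by (intro LIMSEQ_le_const) auto
  moreover have "(\<Inter>n. E n) \<in> sets M"
    using E_sets by blast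
  ultimately have "(\<Inter>n. E n) \<in> null_sets M"
    by (simp add: null_sets_def emeasure_eq_measure measure_le_0_iff)
  moreover have "{\<omega>\<in>space M. \<not> \<not> jumps_at (\<lambda>t. X t \<omega>) s} \<subseteq> (\<Inter>n. E n)"
    using e by (auto simp: jumps_at_def E_def)
  ultimately show ?thesis
    by (rule AE_I')
qed

locale poisson_likelihood =
  fixes M :: "'a measure" and lam :: real and X :: "real \<Rightarrow> 'a \<Rightarrow> nat" and c d :: real
  assumes poisson: "poisson_process M lam X"
    and lam_pos: "0 < lam" and c_pos: "0 < c" and d_pos: "0 < d"
begin

lemma likelihood_path: "\<omega> \<in> space M \<Longrightarrow> likelihood_path (\<lambda>t. X t \<omega>) c d"
  using poisson c_pos d_pos unfolding poisson_process_def likelihood_path_def by auto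

lemma AE_no_jump_at_level_times:
  assumes "0 < K"
  shows "AE \<omega> in M. \<forall>s\<in>level_times c d K A. \<not> jumps_at (\<lambda>t. X t \<omega>) s"
  using countable_level_times[OF assms] d_pos poisson_process_AE_not_jumps_at[OF poisson lam_pos]
  by (simp add: AE_ball_countable)

theorem AE_tendsto_exit_time_at:
  assumes "0 < a" "K \<in> {a<..<b}"
  shows "AE \<omega> in M. ((\<lambda>\<phi>. hitting_time (\<lambda>t. \<phi> * lik_path (\<lambda>t. X t \<omega>) c d t \<notin> {a<..<b}))
           \<longlongrightarrow> hitting_time (\<lambda>t. K * lik_path (\<lambda>t. X t \<omega>) c d t \<notin> {a<..<b})) (at K)"
proof -
  from assms have "0 < K" by simp
  from AE_no_jump_at_level_times[OF this, of a] AE_no_jump_at_level_times[OF this, of b] AE_space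
  show ?thesis
  proof eventually_elim
    case (elim \<omega>)
    then show ?case
      by (intro likelihood_path.tendsto_exit_time_at[OF likelihood_path assms]) auto
  qed
qed

theorem AE_tendsto_exit_time_at_right_lower:
  assumes "0 < a"
  shows "AE \<omega> in M. ((\<lambda>\<phi>. hitting_time (\<lambda>t. \<phi> * lik_path (\<lambda>t. X t \<omega>) c d t \<notin> {a<..<b})) \<longlongrightarrow> 0) (at_right a)"
  using AE_space
  by eventually_elim (rule likelihood_path.tendsto_exit_time_at_right_lower[OF likelihood_path assms])

theorem AE_tendsto_exit_time_at_left_upper:
  assumes "0 < a" "a < b"
  shows "AE \<omega> in M. ((\<lambda>\<phi>. hitting_time (\<lambda>t. \<phi> * lik_path (\<lambda>t. X t \<omega>) c d t \<notin> {a<..<b}))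
           \<longlongrightarrow> hitting_time (\<lambda>t. lik_path (\<lambda>t. X t \<omega>) c d t \<notin> {a / b<..1})) (at_left b)"
proof -
  from assms have "0 < b" by simp
  from AE_no_jump_at_level_times[OF this, of a] AE_space
  show ?thesis
    by eventually_elim (rule likelihood_path.tendsto_exit_time_at_left_upper[OF likelihood_path assms])
qed

end

lemma exit_time_lik:
  "exit_time (lik lam0 lam1 X) a b \<phi> \<omega>
     = hitting_time (\<lambda>t. \<phi> * lik_path (\<lambda>t. X t \<omega>) (ln (lam1 / lam0)) (lam1 - lam0) t \<notin> {a<..<b})"
  by (simp add: exit_time_def hitting_time_def lik_def lik_path_def)

lemma theta_time_lik:
  "theta_time (lik lam0 lam1 X) a b \<omega>
     = hitting_time (\<lambda>t. lik_path (\<lambda>t. X t \<omega>) (ln (lam1 / lam0)) (lam1 - lam0) t \<notin> {a / b<..1})"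
  by (simp add: theta_time_def hitting_time_def lik_def lik_path_def)

theorem proposition3p2:
  fixes M :: "'a measure" and X :: "real \<Rightarrow> 'a \<Rightarrow> nat"
    and lam0 lam1 a b \<alpha> \<beta> :: real
  assumes lam: "0 < lam0" "lam0 < lam1"
    and ab: "0 < a" "0 < b" "lam1 - lam0 > 1 / a + 1 / b"
    and PP: "poisson_process M lam0 X"
    and bounds: "0 < \<alpha>" "\<alpha> < b / a" "b / a < \<beta>"
    and optimal: "\<forall>\<psi>>0. is_stopping_time M X (exit_time (lik lam0 lam1 X) \<alpha> \<beta> \<psi>) \<and>
        (\<forall>\<sigma>. is_stopping_time M X \<sigma> \<longrightarrow>
           bayes_cost M (lik lam0 lam1 X) a b \<psi> (exit_time (lik lam0 lam1 X) \<alpha> \<beta> \<psi>)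
             \<le> bayes_cost M (lik lam0 lam1 X) a b \<psi> \<sigma>)"
  shows "(\<forall>\<phi>0\<in>{\<alpha><..<\<beta>}. AE \<omega> in M.
            ((\<lambda>\<phi>. exit_time (lik lam0 lam1 X) \<alpha> \<beta> \<phi> \<omega>)
               \<longlongrightarrow> exit_time (lik lam0 lam1 X) \<alpha> \<beta> \<phi>0 \<omega>) (at \<phi>0))
       \<and> (AE \<omega> in M. ((\<lambda>\<phi>. exit_time (lik lam0 lam1 X) \<alpha> \<beta> \<phi> \<omega>) \<longlongrightarrow> 0) (at_right \<alpha>))
       \<and> (AE \<omega> in M. ((\<lambda>\<phi>. exit_time (lik lam0 lam1 X) \<alpha> \<beta> \<phi> \<omega>)
               \<longlongrightarrow> theta_time (lik lam0 lam1 X) \<alpha> \<beta> \<omega>) (at_left \<beta>))"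
proof -
  interpret poisson_likelihood M lam0 X "ln (lam1 / lam0)" "lam1 - lam0"
    using PP lam by unfold_locales simp_all
  have "\<alpha> < \<beta>"
    using bounds by simp
  then show ?thesis
    unfolding exit_time_lik theta_time_lik
    using AE_tendsto_exit_time_at[OF bounds(1)] AE_tendsto_exit_time_at_right_lower[OF bounds(1)]
      AE_tendsto_exit_time_at_left_upper[OF bounds(1)]
    by blast
qed

end
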